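(* Let $0 \le \alpha < 1$, let $f = h + \overline{g} \in \mathcal{F}(\alpha)$ and let $\lambda \in \mathbb{C}$ with $|\lambda|=1$. Then $F_\lambda := h + \lambda g$ satisfies, for every $z \in \mathbb{D}$ with $|z| = r$, $$|F_\lambda(z)| \ \ge\ \int_0^r \frac{1-\rho}{(1+\rho)^{2(1-\alpha)}}\,d\rho \;=\; L(r,\alpha),$$ where $L(r,\alpha)$ equals $\frac{2r}{1+r} - \log(1+r)$ if $\alpha=0$, $2\log(1+r) - r$ if $\alpha = 1/2$, and $\frac{(1+r)^{2\alpha}(1+r+2\alpha-2r\alpha) - (1+r)(1+2\alpha)}{2\alpha(1+r)(2\alpha-1)}$ if $\alpha \in (0,1)\setminus\{1/2\}$.
   Context: $\mathbb{D} = \{z \in \mathbb{C} : |z| < 1\}$. For $\alpha \ge -1/2$, $\mathcal{F}(\alpha)$ denotes the set of complex-valued harmonic functions $f = h + \overline{g}$ on $\mathbb{D}$, with $h, g$ analytic in $\mathbb{D}$ normalized by $h(0) = g(0) = 0$, $h'(0) = 1$, such that $\operatorname{Re}\left(1 + \frac{z h''(z)}{h'(z)}\right) > \alpha$ for all $z \in \mathbb{D}$ and, for some real constant $\theta$, $g'(z) = e^{i\theta} z h'(z)$ for all $z \in \mathbb{D}$. *)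

theory Defs
  imports "HOL-Analysis.Analysis"
begin

text \<open>The class F(alpha) of harmonic maps f = h + conj g on the unit disc, given by the pair (h, g).
  The condition Re(1 + z h''/h') > alpha presupposes h' nonvanishing, which we state explicitly
  (Isabelle's division by zero would otherwise make the quotient 0).\<close>
definition class_F :: "real \<Rightarrow> (complex \<Rightarrow> complex) \<Rightarrow> (complex \<Rightarrow> complex) \<Rightarrow> bool" where
  "class_F \<alpha> h g \<longleftrightarrow>
     h holomorphic_on ball 0 1 \<and> g holomorphic_on ball 0 1 \<and>
     h 0 = 0 \<and> g 0 = 0 \<and> deriv h 0 = 1 \<and>
     (\<forall>z\<in>ball 0 1. deriv h z \<noteq> 0 \<and>
        Re (1 + z * deriv (deriv h) z / deriv h z) > \<alpha>) \<and>
     (\<exists>\<theta>::real. \<forall>z\<in>ball 0 1. deriv g z = cis \<theta> * z * deriv h z)"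

definition L_bound :: "real \<Rightarrow> real \<Rightarrow> real" where
  "L_bound r \<alpha> =
     (if \<alpha> = 0 then 2 * r / (1 + r) - ln (1 + r)
      else if \<alpha> = 1/2 then 2 * ln (1 + r) - r
      else ((1 + r) powr (2 * \<alpha>) * (1 + r + 2 * \<alpha> - 2 * r * \<alpha>) - (1 + r) * (1 + 2 * \<alpha>))
           / (2 * \<alpha> * (1 + r) * (2 * \<alpha> - 1)))"

end

theory Submission
  imports Defs "HOL-Complex_Analysis.Complex_Analysis"
begin

text \<open>Since \<open>\<alpha> \<ge> 0\<close>, \<open>h\<close> is starlike: writing \<open>h z = z (1 + w z) h' z\<close>, Jack's lemma
  rules out \<open>|w| \<ge> 1\<close>. In the logarithmic coordinate \<open>K s = log h (exp s)\<close> on the left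
  half-plane this means \<open>Re K' > 0\<close>, so \<open>K\<close> is injective and the preimage under \<open>h\<close> of the
  segment \<open>[0, h z]\<close> is a curve \<open>\<zeta>\<close> from \<open>0\<close> to \<open>z\<close> inside \<open>|\<zeta>| \<le> |z|\<close>. Along it
  \<open>\<zeta>' h' \<zeta> = h z\<close> and \<open>(h + \<lambda> g)' = h' (1 + \<mu> \<zeta>)\<close> with \<open>|\<mu>| = 1\<close>, while the
  Caratheodory bound for \<open>1 + z h''/h'\<close> yields \<open>|h' \<zeta>| \<ge> (1 + |\<zeta>|) powr (- 2 (1 - \<alpha>))\<close>.
  Hence the component of \<open>(h + \<lambda> g) (\<zeta> t)\<close> in the direction of \<open>h z\<close> grows at least as fast
  as the integral of \<open>(1 - \<rho>) / (1 + \<rho>) powr (2 (1 - \<alpha>))\<close> from \<open>0\<close> to \<open>|\<zeta> t|\<close>.\<close>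

lemma norm_has_real_derivative:
  fixes f :: "real \<Rightarrow> complex"
  assumes f: "(f has_vector_derivative f') (at t within S)" and nz: "f t \<noteq> 0"
  shows "((\<lambda>t. norm (f t)) has_real_derivative Re (cnj (f t) * f') / norm (f t)) (at t within S)"
proof -
  have "((\<lambda>t. norm (f t)) has_derivative (\<lambda>x. (x *\<^sub>R f') \<bullet> sgn (f t))) (at t within S)"
    using has_derivative_compose[OF f[unfolded has_vector_derivative_def] has_derivative_norm[OF nz]]
    by simp
  moreover have "(\<lambda>x. (x *\<^sub>R f') \<bullet> sgn (f t)) = (*) (Re (cnj (f t) * f') / norm (f t))"
    by (auto simp: inner_complex_def sgn_div_norm field_simps add_divide_distrib fun_eq_iff)
  ultimately show ?thesis unfolding has_field_derivative_def by simp
qed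

definition L_primitive :: "real \<Rightarrow> real \<Rightarrow> real" where
  "L_primitive \<alpha> x =
     (if \<alpha> = 0 then - 2 / (1 + x) - ln (1 + x)
      else if \<alpha> = 1/2 then 2 * ln (1 + x) - x
      else 2 * (1 + x) powr (2 * \<alpha> - 1) / (2 * \<alpha> - 1) - (1 + x) powr (2 * \<alpha>) / (2 * \<alpha>))"

lemma L_primitive_has_real_derivative:
  fixes \<alpha> x :: real
  assumes x: "-1 < x"
  shows "(L_primitive \<alpha> has_real_derivative (1 - x) / (1 + x) powr (2 * (1 - \<alpha>))) (at x)"
proof -
  have x1: "0 < 1 + x" using x by simp
  consider "\<alpha> = 0" | "\<alpha> = 1/2" | "\<alpha> \<noteq> 0" "\<alpha> \<noteq> 1/2" by blast
  then show ?thesis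
  proof cases
    case 1
    have "((\<lambda>x. - 2 / (1 + x) - ln (1 + x)) has_real_derivative 2 / (1 + x)^2 - 1 / (1 + x)) (at x)"
      using x1 by (auto intro!: derivative_eq_intros simp: power2_eq_square field_simps)
    moreover have "(1 + x) powr (2 * (1 - \<alpha>)) = (1 + x)^2" using 1 x1 by (simp add: powr_numeral)
    then have "2 / (1 + x)^2 - 1 / (1 + x) = (1 - x) / (1 + x) powr (2 * (1 - \<alpha>))"
      using x1 by (simp add: divide_simps power2_eq_square) (simp add: algebra_simps)
    ultimately show ?thesis using 1 unfolding L_primitive_def by simp
  next
    case 2
    then show ?thesis using x1 unfolding L_primitive_def
      by (auto intro!: derivative_eq_intros simp: field_simps)
  next
    case 3
    have d1: "2 * \<alpha> - 1 \<noteq> 0" using 3 by simp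
    have powr_deriv: "((\<lambda>x. (1 + x) powr a) has_real_derivative a * (1 + x) powr (a - 1)) (at x)"
      for a :: real
    proof -
      have "((\<lambda>x. 1 + x) has_real_derivative 1) (at x)" by (auto intro!: derivative_eq_intros)
      from DERIV_chain2[OF has_real_derivative_powr[OF x1, of a] this] show ?thesis by simp
    qed
    have "((\<lambda>x. 2 * (1 + x) powr (2 * \<alpha> - 1) / (2 * \<alpha> - 1) - (1 + x) powr (2 * \<alpha>) / (2 * \<alpha>))
        has_real_derivative 2 * ((2 * \<alpha> - 1) * (1 + x) powr (2 * \<alpha> - 1 - 1)) / (2 * \<alpha> - 1)
          - 2 * \<alpha> * (1 + x) powr (2 * \<alpha> - 1) / (2 * \<alpha>)) (at x)"
      by (intro DERIV_diff DERIV_cdivide DERIV_cmult powr_deriv)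
    moreover have "2 * ((2 * \<alpha> - 1) * (1 + x) powr (2 * \<alpha> - 1 - 1)) / (2 * \<alpha> - 1)
          - 2 * \<alpha> * (1 + x) powr (2 * \<alpha> - 1) / (2 * \<alpha>) = (1 - x) / (1 + x) powr (2 * (1 - \<alpha>))"
    proof -
      define P where "P = (1 + x) powr (2 * \<alpha> - 1)"
      have "P > 0" using x1 by (simp add: P_def)
      have e1: "(1 + x) powr (2 * \<alpha> - 1 - 1) = P / (1 + x)"
        using powr_diff[of "1 + x" "2 * \<alpha> - 1" 1] x1 by (simp add: P_def)
      have e2: "(1 + x) powr (2 * (1 - \<alpha>)) = (1 + x) / P"
        using powr_diff[of "1 + x" 1 "2 * \<alpha> - 1"] x1 by (simp add: P_def algebra_simps)
      have c: "2 * ((2 * \<alpha> - 1) * y) / (2 * \<alpha> - 1) = 2 * y" for y using d1 by simp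
      show ?thesis unfolding e1 e2 c P_def[symmetric]
        using 3(1) x1 \<open>P > 0\<close> by (simp add: field_simps)
    qed
    ultimately show ?thesis using 3 unfolding L_primitive_def by simp
  qed
qed

lemma L_bound_eq_L_primitive:
  fixes r \<alpha> :: real
  assumes r: "-1 < r"
  shows "L_bound r \<alpha> = L_primitive \<alpha> r - L_primitive \<alpha> 0"
proof -
  have r1: "0 < 1 + r" using r by simp
  consider "\<alpha> = 0" | "\<alpha> = 1/2" | "\<alpha> \<noteq> 0" "\<alpha> \<noteq> 1/2" by blast
  then show ?thesis
  proof cases
    case 3
    have "2 * (Q / (1 + r)) / (2 * \<alpha> - 1) - Q / (2 * \<alpha>) - (2 / (2 * \<alpha> - 1) - 1 / (2 * \<alpha>))
        = (Q * (1 + r + 2 * \<alpha> - 2 * r * \<alpha>) - (1 + r) * (1 + 2 * \<alpha>))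
          / (2 * \<alpha> * (1 + r) * (2 * \<alpha> - 1))" for Q
    proof -
      have "2 * \<alpha> - 1 \<noteq> 0" "2 * \<alpha> \<noteq> 0" "1 + r \<noteq> 0" using 3 r1 by auto
      then show ?thesis by (simp add: divide_simps) (simp add: algebra_simps)
    qed
    moreover have "(1 + r) powr (2 * \<alpha> - 1) = (1 + r) powr (2 * \<alpha>) / (1 + r)"
      using r1 by (simp add: powr_diff)
    ultimately show ?thesis using 3 unfolding L_bound_def L_primitive_def by (simp only: if_False) simp
  qed (use r1 in \<open>simp_all add: L_bound_def L_primitive_def field_simps\<close>)
qed

lemma integral_eq_L_bound:
  fixes r \<alpha> :: real
  assumes r: "0 \<le> r"
  shows "integral {0..r} (\<lambda>\<rho>. (1 - \<rho>) / (1 + \<rho>) powr (2 * (1 - \<alpha>))) = L_bound r \<alpha>"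
proof -
  have "((\<lambda>\<rho>. (1 - \<rho>) / (1 + \<rho>) powr (2 * (1 - \<alpha>))) has_integral
      L_primitive \<alpha> r - L_primitive \<alpha> 0) {0..r}"
  proof (rule fundamental_theorem_of_calculus[OF r])
    fix x assume "x \<in> {0..r}"
    then have "(L_primitive \<alpha> has_real_derivative (1 - x) / (1 + x) powr (2 * (1 - \<alpha>))) (at x)"
      by (intro L_primitive_has_real_derivative) auto
    then show "(L_primitive \<alpha> has_vector_derivative (1 - x) / (1 + x) powr (2 * (1 - \<alpha>)))
        (at x within {0..r})"
      by (simp add: has_field_derivative_at_within flip: has_real_derivative_iff_has_vector_derivative)
  qed
  then show ?thesis using r by (simp add: integral_unique L_bound_eq_L_primitive)
qed

lemma Re_cayley_ge:
  fixes w :: complex and s :: real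
  assumes "norm w \<le> s" "s < 1"
  shows "(1 - s) / (1 + s) \<le> Re ((1 + w) / (1 - w))"
proof -
  obtain x y where w: "w = Complex x y" by (cases w)
  have n: "x^2 + y^2 \<le> s^2" using assms(1) unfolding w
    by (metis cmod_power2 complex.sel norm_ge_zero power_mono)
  have s0: "0 \<le> s" using assms(1) norm_ge_zero order_trans by blast
  have "x^2 \<le> s^2" using n by (meson le_add_same_cancel1 order_trans zero_le_power2)
  then have "\<bar>x\<bar> \<le> s" using s0 by (simp add: power2_le_iff_abs_le)
  then have x1: "x < 1" using assms(2) by linarith
  have d: "(1 - x)^2 + y^2 > 0" using x1 by (simp add: add_pos_nonneg)
  have re: "Re ((1 + w) / (1 - w)) = (1 - x^2 - y^2) / ((1 - x)^2 + y^2)"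
    unfolding w by (simp add: Re_divide power2_eq_square algebra_simps)
  define t where "t = sqrt (x^2 + y^2)"
  have "\<bar>x\<bar> \<le> t" unfolding t_def using real_sqrt_le_mono[of "x^2" "x^2 + y^2"] by simp
  then have t: "0 \<le> t" "t \<le> s" "- t \<le> x" "t^2 = x^2 + y^2"
    using n s0 real_sqrt_le_mono[of "x^2 + y^2" "s^2"] by (auto simp: t_def abs_le_iff)
  have "(1 - x^2 - y^2) * (1 + s) - (1 - s) * ((1 - x)^2 + y^2)
      = 2 * ((s - t) * (1 + t) + (x + t) * (1 - s))"
    using t(4) by (simp add: power2_eq_square algebra_simps)
  also have "\<dots> \<ge> 0"
  proof -
    have "0 \<le> (s - t) * (1 + t)" "0 \<le> (x + t) * (1 - s)" using t assms(2) by simp_all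
    then show ?thesis by simp
  qed
  finally show ?thesis unfolding re using d s0 by (simp add: divide_simps)
qed

lemma Re_ge_of_Re_pos_holomorphic:
  fixes P :: "complex \<Rightarrow> complex"
  assumes holP: "P holomorphic_on ball 0 1" and P0: "P 0 = 1"
    and ReP: "\<And>z. z \<in> ball 0 1 \<Longrightarrow> 0 < Re (P z)" and z: "z \<in> ball 0 1"
  shows "(1 - norm z) / (1 + norm z) \<le> Re (P z)"
proof -
  have Pnz: "P z + 1 \<noteq> 0" if "z \<in> ball 0 1" for z
  proof -
    have "0 < Re (P z + 1)" using ReP[OF that] by simp
    then show ?thesis by (metis zero_complex.sel(1) order_less_irrefl)
  qed
  define W where "W = (\<lambda>z. (P z - 1) / (P z + 1))"
  have holW: "W holomorphic_on ball 0 1" unfolding W_def using Pnz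
    by (auto intro!: holomorphic_intros holP)
  have W_lt_1: "norm (W z) < 1" if "norm z < 1" for z
  proof -
    have zb: "z \<in> ball 0 1" using that by simp
    have "(norm (P z - 1))^2 < (norm (P z + 1))^2"
      unfolding cmod_power2 using ReP[OF zb] by (simp add: power2_eq_square algebra_simps)
    then have "norm (P z - 1) < norm (P z + 1)" by (simp add: power_less_imp_less_base)
    then show ?thesis unfolding W_def using Pnz[OF zb] by (simp add: norm_divide divide_less_eq)
  qed
  have "norm (W z) \<le> norm z"
    using Schwarz_Lemma(1)[OF holW _ W_lt_1, of z] z P0 by (simp add: W_def)
  moreover have "P z = (1 + W z) / (1 - W z)"
  proof -
    have "1 - W z = 2 / (P z + 1)" "1 + W z = 2 * P z / (P z + 1)"
      unfolding W_def using Pnz[OF z] by (simp_all add: field_simps)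
    then show ?thesis using Pnz[OF z] by simp
  qed
  ultimately show ?thesis using Re_cayley_ge z by simp
qed

lemma class_F_D:
  assumes "class_F \<alpha> h g"
  shows "h holomorphic_on ball 0 1" "g holomorphic_on ball 0 1" "h 0 = 0" "g 0 = 0" "deriv h 0 = 1"
    "\<And>z. z \<in> ball 0 1 \<Longrightarrow> deriv h z \<noteq> 0"
    "\<And>z. z \<in> ball 0 1 \<Longrightarrow> \<alpha> < Re (1 + z * deriv (deriv h) z / deriv h z)"
    "\<exists>\<theta>::real. \<forall>z\<in>ball 0 1. deriv g z = cis \<theta> * z * deriv h z"
  using assms unfolding class_F_def by auto

lemma holomorphic_on_deriv_ball:
  "f holomorphic_on ball c r \<Longrightarrow> deriv f holomorphic_on ball c r"
  by (rule holomorphic_deriv) auto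

lemma class_F_Re_log_deriv_deriv_ge:
  assumes F: "class_F \<alpha> h g" and a1: "\<alpha> < 1" and z: "z \<in> ball 0 1"
  shows "- 2 * (1 - \<alpha>) * norm z / (1 + norm z) \<le> Re (z * deriv (deriv h) z / deriv h z)"
proof -
  note cF = class_F_D[OF F]
  define P where "P = (\<lambda>z. (1 + z * deriv (deriv h) z / deriv h z - \<alpha>) / (1 - \<alpha>))"
  have "P holomorphic_on ball 0 1" unfolding P_def
    using cF(1,6) a1 by (auto intro!: holomorphic_intros holomorphic_on_deriv_ball)
  moreover have "0 < Re (P z)" if "z \<in> ball 0 1" for z
    using cF(7)[OF that] a1 by (simp add: P_def Re_divide_of_real flip: of_real_diff)
  moreover have "P 0 = 1" using a1 by (simp add: P_def)
  ultimately have "(1 - norm z) / (1 + norm z) \<le> Re (P z)"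
    using Re_ge_of_Re_pos_holomorphic z by blast
  then have "(1 - \<alpha>) * ((1 - norm z) / (1 + norm z)) \<le> (1 - \<alpha>) * Re (P z)"
    using a1 by (intro mult_left_mono) auto
  moreover have "(1 - \<alpha>) * Re (P z) = Re (z * deriv (deriv h) z / deriv h z) + 1 - \<alpha>"
    using a1 by (simp add: P_def Re_divide_of_real flip: of_real_diff)
  moreover have "(1 - \<alpha>) * ((1 - norm z) / (1 + norm z)) = - 2 * (1 - \<alpha>) * norm z / (1 + norm z) + 1 - \<alpha>"
  proof -
    have "0 < 1 + norm z" by (simp add: add_pos_nonneg)
    then show ?thesis by (simp add: field_simps)
  qed
  ultimately show ?thesis by linarith
qed

lemma ln_norm_has_real_derivative:
  fixes f :: "real \<Rightarrow> complex"
  assumes f: "(f has_vector_derivative f') (at t)" and nz: "f t \<noteq> 0"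
  shows "((\<lambda>t. ln (norm (f t))) has_real_derivative Re (f' / f t)) (at t)"
proof -
  have "((\<lambda>t. ln (norm (f t))) has_real_derivative
      1 / norm (f t) * (Re (cnj (f t) * f') / norm (f t))) (at t)"
    using DERIV_chain2[OF DERIV_ln_divide norm_has_real_derivative[OF f nz]] nz by simp
  moreover have "f' / f t = cnj (f t) * f' / of_real ((norm (f t))^2)"
    using nz by (simp add: complex_norm_square[unfolded of_real_power] field_simps)
  ultimately show ?thesis by (simp add: Re_divide_of_real power2_eq_square)
qed

lemma has_vector_derivative_radial:
  assumes "(f has_field_derivative f') (at (of_real t * u))"
  shows "((\<lambda>t. f (of_real t * u)) has_vector_derivative u * f') (at t)"
proof -
  have "((\<lambda>t. of_real t * u) has_vector_derivative u) (at t)"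
    by (auto intro!: derivative_eq_intros simp flip: has_real_derivative_iff_has_vector_derivative)
  from field_vector_diff_chain_at[OF this assms] show ?thesis by (simp add: o_def)
qed

lemma norm_ge_of_Re_log_deriv_ge:
  fixes f :: "complex \<Rightarrow> complex" and c :: real
  assumes holf: "f holomorphic_on ball 0 1" and nz: "\<And>z. z \<in> ball 0 1 \<Longrightarrow> f z \<noteq> 0"
    and bnd: "\<And>z. z \<in> ball 0 1 \<Longrightarrow> - c * norm z / (1 + norm z) \<le> Re (z * deriv f z / f z)"
    and z: "z \<in> ball 0 1"
  shows "norm (f 0) * (1 + norm z) powr (- c) \<le> norm (f z)"
proof (cases "z = 0")
  case False
  define r where "r = norm z"
  define u where "u = z / of_real r"
  have r: "0 < r" "r < 1" using False z by (auto simp: r_def)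
  have u: "norm u = 1" and z_eq: "z = of_real r * u" using r by (auto simp: u_def r_def norm_divide)
  have inD: "of_real \<rho> * u \<in> ball 0 1" if "0 \<le> \<rho>" "\<rho> \<le> r" for \<rho>
    using that r u by (simp add: norm_mult)
  define \<psi> where "\<psi> = (\<lambda>\<rho>. ln (norm (f (of_real \<rho> * u))) + c * ln (1 + \<rho>))"
  have "\<psi> 0 \<le> \<psi> r"
  proof (rule DERIV_nonneg_imp_increasing_open[of 0 r])
    have "continuous_on {0..r} (\<lambda>\<rho>. f (of_real \<rho> * u))"
      by (rule continuous_on_compose2[OF holomorphic_on_imp_continuous_on[OF holf]])
         (use inD in \<open>auto intro!: continuous_intros\<close>)
    then show "continuous_on {0..r} \<psi>" unfolding \<psi>_def
      using nz inD by (auto intro!: continuous_intros)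
  next
    fix \<rho> assume \<rho>: "0 < \<rho>" "\<rho> < r"
    define Z where "Z = of_real \<rho> * u"
    have Z: "Z \<in> ball 0 1" "f Z \<noteq> 0" "norm Z = \<rho>" using inD nz \<rho> u by (auto simp: Z_def norm_mult)
    have "(f has_field_derivative deriv f Z) (at Z)"
      using holomorphic_derivI[OF holf _ Z(1)] by simp
    then have "((\<lambda>\<rho>. ln (norm (f (of_real \<rho> * u)))) has_real_derivative Re (u * deriv f Z / f Z)) (at \<rho>)"
      using ln_norm_has_real_derivative[OF has_vector_derivative_radial] Z by (simp add: Z_def)
    moreover have "((\<lambda>\<rho>. c * ln (1 + \<rho>)) has_real_derivative c * (1 / (1 + \<rho>))) (at \<rho>)"
      using \<rho> by (auto intro!: derivative_eq_intros)
    ultimately have "(\<psi> has_real_derivative Re (u * deriv f Z / f Z) + c * (1 / (1 + \<rho>))) (at \<rho>)"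
      unfolding \<psi>_def by (rule DERIV_add)
    moreover have "- c / (1 + \<rho>) \<le> Re (u * deriv f Z / f Z)"
    proof -
      have "Z * deriv f Z / f Z = of_real \<rho> * (u * deriv f Z / f Z)"
        by (simp add: Z_def)
      then have "Re (Z * deriv f Z / f Z) = \<rho> * Re (u * deriv f Z / f Z)"
        by (simp del: times_divide_eq_right)
      then have "\<rho> * (- c / (1 + \<rho>)) \<le> \<rho> * Re (u * deriv f Z / f Z)"
        using bnd[OF Z(1)] Z(3) by (simp add: mult.commute)
      then show ?thesis using \<rho> by (simp only: mult_le_cancel_left_pos)
    qed
    ultimately show "\<exists>y. (\<psi> has_real_derivative y) (at \<rho>) \<and> 0 \<le> y" by force
  qed (use r in simp)
  then have "ln (norm (f 0)) - c * ln (1 + r) \<le> ln (norm (f z))"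
    by (simp add: \<psi>_def z_eq)
  then have "exp (ln (norm (f 0)) - c * ln (1 + r)) \<le> norm (f z)"
    using nz z by (metis exp_le_cancel_iff exp_ln zero_less_norm_iff)
  moreover have "exp (ln (norm (f 0)) - c * ln (1 + r)) = norm (f 0) * (1 + r) powr (- c)"
    using nz[of 0] r by (simp add: exp_diff powr_def exp_minus divide_inverse)
  ultimately show ?thesis by (simp add: r_def)
qed simp

lemma class_F_norm_deriv_ge:
  assumes F: "class_F \<alpha> h g" and a1: "\<alpha> < 1" and z: "z \<in> ball 0 1"
  shows "(1 + norm z) powr (- (2 * (1 - \<alpha>))) \<le> norm (deriv h z)"
proof -
  have "- (2 * (1 - \<alpha>)) * norm z / (1 + norm z) \<le> Re (z * deriv (deriv h) z / deriv h z)"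
    if "z \<in> ball 0 1" for z
    using class_F_Re_log_deriv_deriv_ge[OF F a1 that] by simp
  from norm_ge_of_Re_log_deriv_ge[OF holomorphic_on_deriv_ball[OF class_F_D(1)[OF F]]
      class_F_D(6)[OF F] this z]
  show ?thesis using class_F_D(5)[OF F] by simp
qed

lemma first_point_norm_eq_1:
  fixes w :: "complex \<Rightarrow> complex"
  assumes contw: "continuous_on (ball 0 1) w" and w0: "norm (w 0) < 1"
    and z: "z \<in> ball 0 1" and wz: "1 \<le> norm (w z)"
  obtains z0 where "z0 \<in> ball 0 1" "norm (w z0) = 1"
    "\<And>y. norm y < norm z0 \<Longrightarrow> norm (w y) < 1" "\<And>y. norm y \<le> norm z0 \<Longrightarrow> norm (w y) \<le> 1"
proof -
  have sub: "cball 0 (norm z) \<subseteq> ball 0 1" using z by auto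
  define C where "C = cball 0 (norm z) \<inter> (\<lambda>y. norm (w y)) -` {1..}"
  have "closed C" unfolding C_def
    by (rule continuous_closed_preimage)
       (auto intro!: continuous_intros continuous_on_subset[OF contw sub])
  then have cC: "compact C" unfolding C_def by (simp add: compact_eq_bounded_closed bounded_Int)
  have zC: "z \<in> C" unfolding C_def using wz by simp
  obtain z0 where z0C: "z0 \<in> C" and z0min: "\<And>y. y \<in> C \<Longrightarrow> norm z0 \<le> norm y"
    using continuous_attains_inf[OF cC _ continuous_on_norm_id] zC by blast
  have z0: "z0 \<in> ball 0 1" "norm z0 \<le> norm z" "1 \<le> norm (w z0)"
    using z0C z unfolding C_def by auto
  have lt: "norm (w y) < 1" if "norm y < norm z0" for y
  proof (rule ccontr)
    assume "\<not> norm (w y) < 1"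
    then have "y \<in> C" unfolding C_def using that z0(2) by auto
    then show False using z0min that by fastforce
  qed
  have le: "norm (w y) \<le> 1" if "norm y \<le> norm z0" for y
  proof -
    have "z0 \<noteq> 0" using z0(3) w0 by auto
    have "w ` closure (ball 0 (norm z0)) \<subseteq> cball 0 1"
    proof (rule image_closure_subset)
      have "closure (ball (0::complex) (norm z0)) = cball 0 (norm z0)" using \<open>z0 \<noteq> 0\<close> by (simp add: closure_ball)
      then have "closure (ball (0::complex) (norm z0)) \<subseteq> ball 0 1" using z0(1) by auto
      then show "continuous_on (closure (ball 0 (norm z0))) w"
        by (rule continuous_on_subset[OF contw])
      show "w ` ball 0 (norm z0) \<subseteq> cball 0 1" using lt by (simp add: image_subset_iff less_imp_le)
    qed simp
    then show ?thesis using that \<open>z0 \<noteq> 0\<close> by (simp add: image_subset_iff)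
  qed
  show ?thesis
    by (rule that[OF z0(1) _ lt le]) (use le[of z0] z0(3) in simp)
qed

lemma jack_radial:
  assumes holw: "w holomorphic_on ball 0 1" and w0: "w 0 = 0" and z0: "z0 \<in> ball 0 1"
    and wz0: "norm (w z0) = 1" and lt: "\<And>y. norm y < norm z0 \<Longrightarrow> norm (w y) < 1"
  shows "1 \<le> Re (cnj (w z0) * (z0 * deriv w z0))"
proof (rule ccontr)
  assume neg: "\<not> ?thesis"
  have z0_nz: "z0 \<noteq> 0" using wz0 w0 by auto
  \<comment> \<open>Schwarz's lemma for \<open>\<zeta> \<mapsto> w (|z0| \<zeta>)\<close> gives \<open>|w (t z0)| \<le> t\<close> on \<open>[0, 1)\<close>.\<close>
  have schwarz: "norm (w (of_real t * z0)) \<le> t" if "0 \<le> t" "t < 1" for t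
  proof -
    define v where "v = (\<lambda>\<zeta>. w (of_real (norm z0) * \<zeta>))"
    have scaled: "norm (of_real (norm z0) * \<zeta>) < 1" if "norm \<zeta> < 1" for \<zeta> :: complex
      using mult_strict_mono[of "norm z0" 1 "norm \<zeta>" 1] that z0 by (simp add: norm_mult)
    have "v holomorphic_on ball 0 1" unfolding v_def
      by (rule holomorphic_on_compose_gen[where g=w and t="ball 0 1", unfolded o_def])
         (use holw scaled in \<open>auto intro!: holomorphic_intros\<close>)
    moreover have "norm (v \<zeta>) < 1" if "norm \<zeta> < 1" for \<zeta>
      unfolding v_def using that z0_nz by (intro lt) (simp add: norm_mult)
    moreover define u where "u = z0 / of_real (norm z0)"
    have u: "norm u = 1" "of_real (norm z0) * (of_real t * u) = of_real t * z0"
      using z0_nz by (simp_all add: u_def norm_divide)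
    moreover have "norm (of_real t * u) < 1" using that u by (simp add: norm_mult)
    ultimately have "norm (v (of_real t * u)) \<le> norm (of_real t * u)"
      using Schwarz_Lemma(1)[of v] w0 by (simp add: v_def)
    then show ?thesis using that u by (simp add: v_def norm_mult)
  qed
  have wnz: "w z0 \<noteq> 0" using wz0 by auto
  have "(w has_field_derivative deriv w z0) (at (of_real 1 * z0))"
    using holomorphic_derivI[OF holw _ z0] by simp
  then have "((\<lambda>t. w (of_real t * z0)) has_vector_derivative z0 * deriv w z0) (at 1)"
    using has_vector_derivative_radial by fastforce
  from norm_has_real_derivative[OF this] wnz wz0
  have "((\<lambda>t. norm (w (of_real t * z0))) has_real_derivative Re (cnj (w z0) * (z0 * deriv w z0))) (at 1)"
    by simp
  then have dG: "((\<lambda>t. norm (w (of_real t * z0)) - t) has_real_derivative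
      Re (cnj (w z0) * (z0 * deriv w z0)) - 1) (at 1)"
    by (rule DERIV_diff) (rule DERIV_ident)
  have "Re (cnj (w z0) * (z0 * deriv w z0)) - 1 < 0" using neg by simp
  from DERIV_neg_dec_left[OF dG this] obtain d where d: "d > 0"
    and dec: "\<forall>h>0. h < d \<longrightarrow> norm (w z0) - 1 < norm (w (of_real (1 - h) * z0)) - (1 - h)"
    by auto
  define t where "t = min (d / 2) (1 / 2)"
  have t: "0 < t" "t < d" "t < 1" using d by (auto simp: t_def)
  then have "norm (w z0) - 1 < norm (w (of_real (1 - t) * z0)) - (1 - t)" using dec by blast
  moreover have "norm (w (of_real (1 - t) * z0)) \<le> 1 - t" using schwarz[of "1 - t"] t by linarith
  ultimately show False using wz0 by simp
qed

lemma jack_angular: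
  assumes holw: "w holomorphic_on ball 0 1" and z0: "z0 \<in> ball 0 1"
    and wz0: "norm (w z0) = 1" and le: "\<And>y. norm y = norm z0 \<Longrightarrow> norm (w y) \<le> 1"
  shows "Im (cnj (w z0) * (z0 * deriv w z0)) = 0"
proof -
  define \<Phi> where "\<Phi> = (\<lambda>t::real. norm (w (z0 * exp (of_real t * \<i>))))"
  have "(w has_field_derivative deriv w z0) (at (z0 * exp (of_real 0 * \<i>)))"
    using holomorphic_derivI[OF holw _ z0] by simp
  moreover have "((\<lambda>x. z0 * exp (x * \<i>)) has_field_derivative z0 * \<i>) (at (of_real 0))"
    by (auto intro!: derivative_eq_intros)
  ultimately have "((\<lambda>x. w (z0 * exp (x * \<i>))) has_field_derivative deriv w z0 * (z0 * \<i>)) (at (of_real 0))"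
    using DERIV_chain2 by fastforce
  then have "((\<lambda>t. w (z0 * exp (of_real t * \<i>))) has_vector_derivative deriv w z0 * (z0 * \<i>)) (at 0)"
    using has_vector_derivative_real_field by fastforce
  from norm_has_real_derivative[OF this] wz0
  have "(\<Phi> has_real_derivative Re (cnj (w z0) * (deriv w z0 * (z0 * \<i>)))) (at 0)"
    unfolding \<Phi>_def by fastforce
  moreover have "\<Phi> y \<le> \<Phi> 0" for y
    using le[of "z0 * exp (of_real y * \<i>)"] wz0 by (simp add: \<Phi>_def norm_mult)
  ultimately have "Re (cnj (w z0) * (deriv w z0 * (z0 * \<i>))) = 0"
    by (intro DERIV_local_max[of _ _ 0 1]) auto
  then show ?thesis by (simp add: algebra_simps)
qed

lemma jack_lemma:
  assumes holw: "w holomorphic_on ball 0 1" and w0: "w 0 = 0" and z0: "z0 \<in> ball 0 1"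
    and wz0: "norm (w z0) = 1" and lt: "\<And>y. norm y < norm z0 \<Longrightarrow> norm (w y) < 1"
    and le: "\<And>y. norm y \<le> norm z0 \<Longrightarrow> norm (w y) \<le> 1"
  obtains k :: real where "1 \<le> k" "z0 * deriv w z0 = of_real k * w z0"
proof -
  define k where "k = cnj (w z0) * (z0 * deriv w z0)"
  have "1 \<le> Re k" using jack_radial[OF holw w0 z0 wz0 lt] by (simp add: k_def)
  moreover have "Im k = 0" using jack_angular[OF holw z0 wz0] le by (simp add: k_def)
  moreover have "cnj (w z0) * w z0 = 1"
    using complex_norm_square[of "w z0"] wz0 by (simp add: mult.commute)
  then have "z0 * deriv w z0 = k * w z0" by (simp add: k_def algebra_simps)
  ultimately show thesis using that[of "Re k"] by (simp add: complex_eq_iff)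
qed

lemma Re_one_minus_mult_div_nonpos:
  fixes w :: complex and k :: real
  assumes "norm w = 1" "1 \<le> k" "1 + w \<noteq> 0"
  shows "Re ((1 - of_real k * w) / (1 + w)) \<le> 0"
proof -
  obtain x y where w: "w = Complex x y" by (cases w)
  have n: "x^2 + y^2 = 1" using assms(1) unfolding w by (simp add: cmod_def)
  then have "x^2 \<le> 1" by (metis le_add_same_cancel1 zero_le_power2)
  then have x: "-1 \<le> x" by (simp add: abs_square_le_1 abs_le_iff)
  have "Re ((1 - of_real k * w) / (1 + w)) = ((1 - k * x) * (1 + x) - k * y * y) / ((1 + x)^2 + y^2)"
    unfolding w by (simp add: Re_divide power2_eq_square algebra_simps)
  also have "(1 - k * x) * (1 + x) - k * y * y = (1 - k) * (1 + x)"
  proof -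
    have "y * y = 1 - x * x" using n by (simp add: power2_eq_square algebra_simps)
    then have "(1 - k * x) * (1 + x) - k * y * y = (1 - k * x) * (1 + x) - k * (1 - x * x)"
      by (simp add: mult.assoc)
    then show ?thesis by (simp add: algebra_simps)
  qed
  also have "(1 - k) * (1 + x) / ((1 + x)^2 + y^2) \<le> 0"
    using assms(2) x by (intro divide_nonpos_nonneg mult_nonpos_nonneg) auto
  finally show ?thesis .
qed

lemma class_F_factor:
  assumes F: "class_F \<alpha> h g"
  obtains w where "w holomorphic_on ball 0 1" "w 0 = 0"
    "\<And>z. z \<in> ball 0 1 \<Longrightarrow> h z = z * (1 + w z) * deriv h z"
proof -
  note cF = class_F_D[OF F]
  define q where "q = (\<lambda>z. if z = 0 then deriv h 0 else (h z - h 0) / (z - 0))"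
  have "q holomorphic_on ball 0 1" unfolding q_def
    by (rule pole_lemma_open[OF cF(1)]) simp
  then have "(\<lambda>z. q z / deriv h z - 1) holomorphic_on ball 0 1"
    using cF(1,6) by (auto intro!: holomorphic_intros holomorphic_on_deriv_ball)
  moreover have "h z = z * (1 + (q z / deriv h z - 1)) * deriv h z" if "z \<in> ball 0 1" for z
    using cF(3) cF(6)[OF that] by (cases "z = 0") (auto simp: q_def)
  ultimately show ?thesis using that cF(5) by (simp add: q_def)
qed

lemma deriv_of_factorization:
  assumes holh: "h holomorphic_on S" and holw: "w holomorphic_on S" and S: "open S"
    and eq: "\<And>z. z \<in> S \<Longrightarrow> h z = z * (1 + w z) * deriv h z" and z: "z \<in> S"
  shows "deriv h z = (1 + w z) * deriv h z + z * deriv w z * deriv h z + z * (1 + w z) * deriv (deriv h) z"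
proof -
  have dw: "(w has_field_derivative deriv w z) (at z)"
    by (rule holomorphic_derivI[OF holw S z])
  have dh': "(deriv h has_field_derivative deriv (deriv h) z) (at z)"
    by (rule holomorphic_derivI[OF holomorphic_deriv[OF holh S] S z])
  have "((\<lambda>z. z * (1 + w z) * deriv h z) has_field_derivative
        (1 * (1 + w z) + z * deriv w z) * deriv h z + z * (1 + w z) * deriv (deriv h) z) (at z)"
    by (rule derivative_eq_intros dw dh' refl)+ simp
  then have "(h has_field_derivative
        (1 * (1 + w z) + z * deriv w z) * deriv h z + z * (1 + w z) * deriv (deriv h) z) (at z)"
    by (rule has_field_derivative_transform_within_open[OF _ S z]) (simp add: eq)
  from DERIV_unique[OF this holomorphic_derivI[OF holh S z]] show ?thesis
    by (simp add: distrib_right)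
qed

lemma class_F_factor_norm_lt_1:
  assumes F: "class_F \<alpha> h g" and a0: "0 \<le> \<alpha>"
    and holw: "w holomorphic_on ball 0 1" and w0: "w 0 = 0"
    and eq: "\<And>z. z \<in> ball 0 1 \<Longrightarrow> h z = z * (1 + w z) * deriv h z"
    and z: "z \<in> ball 0 1"
  shows "norm (w z) < 1"
proof (rule ccontr)
  assume "\<not> norm (w z) < 1"
  then have "1 \<le> norm (w z)" by simp
  moreover have "norm (w 0) < 1" using w0 by simp
  ultimately obtain z0 where z0: "z0 \<in> ball 0 1" and wz0: "norm (w z0) = 1"
    and lt: "\<And>y. norm y < norm z0 \<Longrightarrow> norm (w y) < 1"
    and le: "\<And>y. norm y \<le> norm z0 \<Longrightarrow> norm (w y) \<le> 1"
    using first_point_norm_eq_1[OF holomorphic_on_imp_continuous_on[OF holw] _ z] by blast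
  obtain k where k: "1 \<le> k" and jack: "z0 * deriv w z0 = of_real k * w z0"
    using jack_lemma[OF holw w0 z0 wz0 lt le] by blast
  note cF = class_F_D[OF F]
  define H1 H2 W where "H1 = deriv h z0" and "H2 = deriv (deriv h) z0" and "W = w z0"
  have H1: "H1 \<noteq> 0" using cF(6)[OF z0] by (simp add: H1_def)
  have "H1 = (1 + W) * H1 + (z0 * deriv w z0) * H1 + z0 * (1 + W) * H2"
    unfolding H1_def H2_def W_def by (rule deriv_of_factorization[OF cF(1) holw open_ball eq z0])
  then have der: "H1 = (1 + W) * H1 + of_real k * W * H1 + z0 * (1 + W) * H2"
    unfolding jack W_def .
  have W1: "1 + W \<noteq> 0"
  proof
    assume "1 + W = 0"
    then have "W = -1" by (simp add: add_eq_0_iff)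
    with der have "H1 + of_real k * H1 = 0" by (simp add: eq_neg_iff_add_eq_0)
    then have "of_real (1 + k) * H1 = 0" by (simp add: algebra_simps)
    then show False using H1 k by (simp only: mult_eq_0_iff of_real_eq_0_iff) linarith
  qed
  \<comment> \<open>the differentiated factorization expresses \<open>1 + z h''/h'\<close> at \<open>z0\<close> through \<open>k\<close> and \<open>w z0\<close>\<close>
  have "H1 * ((1 + W) * (1 + z0 * H2 / H1)) = (1 + W) * H1 + z0 * (1 + W) * H2"
    using H1 by (simp add: field_simps)
  also have "\<dots> = H1 * (1 - of_real k * W)" using der by (simp add: algebra_simps)
  finally have "(1 + W) * (1 + z0 * H2 / H1) = 1 - of_real k * W" using H1 by simp
  then have "1 + z0 * H2 / H1 = (1 - of_real k * W) / (1 + W)"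
    using W1 by (simp add: eq_divide_eq mult.commute)
  then have "Re (1 + z0 * H2 / H1) \<le> 0"
    using Re_one_minus_mult_div_nonpos[OF _ k W1] wz0 by (simp add: W_def)
  moreover have "\<alpha> < Re (1 + z0 * H2 / H1)" using cF(7)[OF z0] by (simp add: H1_def H2_def)
  ultimately show False using a0 by simp
qed

lemma bounded_comp_exp_left_halfplane:
  fixes L :: "complex \<Rightarrow> 'a::real_normed_vector"
  assumes L: "continuous_on (ball 0 1) L" and c: "c < 0"
  obtains M where "\<And>s. Re s \<le> c \<Longrightarrow> norm (L (exp s)) \<le> M"
proof -
  have "cball 0 (exp c) \<subseteq> ball (0::complex) 1"
  proof
    fix x :: complex assume "x \<in> cball 0 (exp c)"
    then have "norm x \<le> exp c" by simp
    also have "exp c < 1" using c by simp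
    finally show "x \<in> ball 0 1" by simp
  qed
  then have "compact (L ` cball 0 (exp c))"
    by (intro compact_continuous_image continuous_on_subset[OF L]) auto
  then obtain M where "\<And>x. x \<in> cball 0 (exp c) \<Longrightarrow> norm (L x) \<le> M"
    by (meson compact_imp_bounded bounded_iff imageI)
  then show ?thesis by (intro that[of M]) (simp add: norm_exp_eq_Re)
qed

lemma deriv_exp_comp_eq:
  assumes holK: "K holomorphic_on S" and S: "open S" and holh: "h holomorphic_on T" and "open T"
    and T: "\<And>s. s \<in> S \<Longrightarrow> exp s \<in> T" and eq: "\<And>s. s \<in> S \<Longrightarrow> exp (K s) = h (exp s)"
    and s: "s \<in> S"
  shows "exp (K s) * deriv K s = deriv h (exp s) * exp s"
proof -
  have "((\<lambda>s. exp (K s)) has_field_derivative exp (K s) * deriv K s) (at s)"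
    by (rule derivative_eq_intros holomorphic_derivI[OF holK S s] refl)+
  then have "((\<lambda>s. h (exp s)) has_field_derivative exp (K s) * deriv K s) (at s)"
    by (rule has_field_derivative_transform_within_open[OF _ S s]) (simp add: eq)
  moreover have "((\<lambda>s. h (exp s)) has_field_derivative deriv h (exp s) * exp s) (at s)"
    using DERIV_chain2[OF holomorphic_derivI[OF holh \<open>open T\<close> T[OF s]] DERIV_exp] .
  ultimately show ?thesis by (rule DERIV_unique)
qed

lemma class_F_log_coordinate:
  assumes F: "class_F \<alpha> h g" and a0: "0 \<le> \<alpha>"
  obtains K where "K holomorphic_on {s. Re s < 0}"
    "\<And>s. Re s < 0 \<Longrightarrow> exp (K s) = h (exp s)"
    "\<And>s. Re s < 0 \<Longrightarrow> 0 < Re (deriv K s)"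
    "\<And>c. c < 0 \<Longrightarrow> \<exists>M. \<forall>s. Re s \<le> c \<longrightarrow> norm (K s - s) \<le> M"
proof -
  note cF = class_F_D[OF F]
  obtain w where holw: "w holomorphic_on ball 0 1" and w0: "w 0 = 0"
    and eq: "\<And>z. z \<in> ball 0 1 \<Longrightarrow> h z = z * (1 + w z) * deriv h z"
    using class_F_factor[OF F] by blast
  have Re_w: "- 1 < Re (w z)" if "z \<in> ball 0 1" for z
    using class_F_factor_norm_lt_1[OF F a0 holw w0 eq that] abs_Re_le_cmod[of "w z"] by linarith
  have w1: "1 + w z \<noteq> 0" if "z \<in> ball 0 1" for z
  proof
    assume "1 + w z = 0"
    then have "Re (w z) = -1" by (simp add: add_eq_0_iff complex_eq_iff)
    with Re_w[OF that] show False by simp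
  qed
  have hol: "(\<lambda>z. (1 + w z) * deriv h z) holomorphic_on ball 0 1"
    by (intro holomorphic_intros holw holomorphic_on_deriv_ball cF(1))
  have nz: "(1 + w z) * deriv h z \<noteq> 0" if "z \<in> ball 0 1" for z
    using w1[OF that] cF(6)[OF that] by simp
  obtain L where holL: "L holomorphic_on ball 0 1"
    and expL: "\<And>z. z \<in> ball 0 1 \<Longrightarrow> exp (L z) = (1 + w z) * deriv h z"
    using holomorphic_logarithm_exists[OF convex_ball open_ball hol nz, of 0] by auto
  define H where "H = {s::complex. Re s < 0}"
  have oH: "open H" unfolding H_def by (rule open_halfspace_Re_lt)
  have expD: "exp s \<in> ball 0 1" if "s \<in> H" for s
    using that by (simp add: H_def norm_exp_eq_Re)
  define K where "K = (\<lambda>s. s + L (exp s))"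
  have holK: "K holomorphic_on H"
  proof -
    have "(L \<circ> exp) holomorphic_on H"
      by (rule holomorphic_on_compose_gen[OF _ holL]) (use expD in \<open>auto intro!: holomorphic_intros\<close>)
    then show ?thesis unfolding K_def o_def by (intro holomorphic_intros)
  qed
  have expK: "exp (K s) = h (exp s)" if "s \<in> H" for s
    using expL[OF expD[OF that]] eq[OF expD[OF that]] by (simp add: K_def exp_add mult.assoc)
  \<comment> \<open>\<open>K' s = exp s h' (exp s) / h (exp s)\<close>, which the factorization turns into \<open>1 / (1 + w (exp s))\<close>\<close>
  have dK: "deriv K s * (1 + w (exp s)) = 1" if s: "s \<in> H" for s
  proof -
    have "exp (K s) * deriv K s = deriv h (exp s) * exp s"
      by (rule deriv_exp_comp_eq[OF holK oH cF(1) open_ball expD expK s])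
    then have "(exp s * deriv h (exp s)) * (deriv K s * (1 + w (exp s))) = (exp s * deriv h (exp s)) * 1"
      using expK[OF s] eq[OF expD[OF s]] by (simp add: algebra_simps)
    then show ?thesis using cF(6)[OF expD[OF s]] by simp
  qed
  have ReK: "0 < Re (deriv K s)" if s: "s \<in> H" for s
  proof -
    have "0 < Re (1 / (1 + w (exp s)))" using Re_w[OF expD[OF s]] by (simp add: Re_complex_div_gt_0)
    moreover have "deriv K s = 1 / (1 + w (exp s))"
      using dK[OF s] w1[OF expD[OF s]] by (simp add: eq_divide_eq)
    ultimately show ?thesis by simp
  qed
  have "\<exists>M. \<forall>s. Re s \<le> c \<longrightarrow> norm (K s - s) \<le> M" if "c < 0" for c
    using bounded_comp_exp_left_halfplane[OF holomorphic_on_imp_continuous_on[OF holL] that]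
    by (metis K_def add_diff_cancel_left')
  then show ?thesis using that[of K] holK expK ReK by (simp add: H_def)
qed

lemma inj_on_if_Re_deriv_pos:
  assumes holK: "K holomorphic_on S" and S: "open S" "convex S"
    and ReK: "\<And>s. s \<in> S \<Longrightarrow> 0 < Re (deriv K s)"
  shows "inj_on K S"
proof (rule inj_onI, rule ccontr)
  fix s1 s2 assume s1: "s1 \<in> S" and s2: "s2 \<in> S" and eq: "K s1 = K s2" and ne: "s1 \<noteq> s2"
  define d where "d = s2 - s1"
  have dnz: "d \<noteq> 0" using ne by (simp add: d_def)
  have seg: "s1 + of_real t * d \<in> S" if "0 \<le> t" "t \<le> 1" for t
  proof -
    have "s1 + of_real t * d = (1 - t) *\<^sub>R s1 + t *\<^sub>R s2"
      by (simp add: d_def scaleR_conv_of_real algebra_simps)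
    then show ?thesis using convexD[OF S(2) s1 s2, of "1 - t" t] that by simp
  qed
  \<comment> \<open>along the segment, \<open>Re (K / d)\<close> has derivative \<open>Re K' > 0\<close>, so it cannot return to its initial value\<close>
  define \<phi> where "\<phi> = (\<lambda>t::real. Re (K (s1 + of_real t * d) / d))"
  have "\<phi> 0 < \<phi> 1"
  proof (rule DERIV_pos_imp_increasing[of 0 1 \<phi>])
    fix t :: real assume t: "0 \<le> t" "t \<le> 1"
    have dK: "(K has_field_derivative deriv K (s1 + of_real t * d)) (at ((\<lambda>x. s1 + x * d) (of_real t)))"
      using holomorphic_derivI[OF holK S(1) seg[OF t]] by simp
    have "((\<lambda>x. s1 + x * d) has_field_derivative d) (at (of_real t))"
      by (auto intro!: derivative_eq_intros)
    from DERIV_cdivide[OF DERIV_chain2[OF dK this], of d] dnz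
    have "((\<lambda>x. K (s1 + x * d) / d) has_field_derivative deriv K (s1 + of_real t * d)) (at (of_real t))"
      by simp
    then have "(\<phi> has_real_derivative Re (deriv K (s1 + of_real t * d))) (at t)"
      unfolding \<phi>_def by (intro has_field_derivative_Re has_vector_derivative_real_field)
    then show "\<exists>y. (\<phi> has_real_derivative y) (at t) \<and> 0 < y" using ReK[OF seg[OF t]] by blast
  qed simp
  moreover have "\<phi> 0 = \<phi> 1" unfolding \<phi>_def using eq by (simp add: d_def)
  ultimately show False by simp
qed

lemma holomorphic_inverse_if_Re_deriv_pos:
  assumes holK: "K holomorphic_on S" and S: "open S" "convex S"
    and ReK: "\<And>s. s \<in> S \<Longrightarrow> 0 < Re (deriv K s)"
  obtains g where "open (K ` S)" "g holomorphic_on K ` S" "\<And>s. s \<in> S \<Longrightarrow> g (K s) = s"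
    "\<And>p. p \<in> K ` S \<Longrightarrow> 0 < Re (deriv g p)"
proof -
  have inj: "inj_on K S" by (rule inj_on_if_Re_deriv_pos[OF holK S ReK])
  obtain g where holg: "g holomorphic_on K ` S"
    and dgK: "\<And>s. s \<in> S \<Longrightarrow> deriv K s * deriv g (K s) = 1"
    and gK: "\<And>s. s \<in> S \<Longrightarrow> g (K s) = s"
    using holomorphic_has_inverse[OF holK S(1) inj] by blast
  have "0 < Re (deriv g p)" if "p \<in> K ` S" for p
  proof -
    obtain s where s: "s \<in> S" "p = K s" using \<open>p \<in> K ` S\<close> by blast
    then have "deriv g p = 1 / deriv K s" using dgK[OF s(1)] by (auto simp: eq_divide_eq mult.commute)
    then show ?thesis using ReK[OF s(1)] by (simp add: Re_complex_div_gt_0)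
  qed
  with open_mapping_thm3[OF holK S(1) inj] holg gK that show ?thesis by blast
qed

lemma inverse_leftward_Re_le:
  assumes oKS: "open (K ` S)" and holg: "g holomorphic_on K ` S"
    and gK: "\<And>s. s \<in> S \<Longrightarrow> g (K s) = s" and Reg: "\<And>p. p \<in> K ` S \<Longrightarrow> 0 < Re (deriv g p)"
    and \<sigma>: "\<sigma> \<in> S"
  obtains \<epsilon> where "0 < \<epsilon>"
    "\<And>t. 0 \<le> t \<Longrightarrow> t \<le> \<epsilon> \<Longrightarrow> K \<sigma> - of_real t \<in> K ` S \<and> Re (g (K \<sigma> - of_real t)) \<le> Re \<sigma>"
proof -
  obtain e where e: "0 < e" "ball (K \<sigma>) e \<subseteq> K ` S"
    using oKS \<sigma> by (meson imageI open_contains_ball)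
  have inKS: "K \<sigma> - of_real t \<in> K ` S" if "0 \<le> t" "t \<le> e / 2" for t
    using e that by (auto simp: dist_norm intro!: subsetD[OF e(2)])
  have "Re (g (K \<sigma> - of_real t)) \<le> Re (g (K \<sigma> - of_real 0))" if "0 \<le> t" "t \<le> e / 2" for t
  proof (rule DERIV_nonpos_imp_nonincreasing[OF that(1)])
    fix x assume x: "0 \<le> x" "x \<le> t"
    then have p: "K \<sigma> - of_real x \<in> K ` S" using inKS that by auto
    have d1: "(g has_field_derivative deriv g (K \<sigma> - of_real x)) (at ((\<lambda>y. K \<sigma> - y) (of_real x)))"
      using holomorphic_derivI[OF holg oKS p] by simp
    have d2: "((\<lambda>y. K \<sigma> - y) has_field_derivative -1) (at (of_real x))"
      by (auto intro!: derivative_eq_intros)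
    from DERIV_chain2[OF d1 d2]
    have "((\<lambda>y. g (K \<sigma> - y)) has_field_derivative - deriv g (K \<sigma> - of_real x)) (at (of_real x))"
      by simp
    then have "((\<lambda>t. Re (g (K \<sigma> - of_real t))) has_real_derivative - Re (deriv g (K \<sigma> - of_real x))) (at x)"
      using has_field_derivative_Re[OF has_vector_derivative_real_field] by fastforce
    then show "\<exists>y. ((\<lambda>t. Re (g (K \<sigma> - of_real t))) has_real_derivative y) (at x) \<and> y \<le> 0"
      using Reg[OF p] by (intro exI[of _ "- Re (deriv g (K \<sigma> - of_real x))"]) simp
  qed
  then show ?thesis using that[of "e / 2"] e(1) inKS gK[OF \<sigma>] by simp
qed

lemma leftward_ray_in_image:
  fixes K :: "complex \<Rightarrow> complex"
  assumes contK: "continuous_on {s. Re s \<le> c} K"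
    and bnd: "\<And>s. Re s \<le> c \<Longrightarrow> norm (K s - s) \<le> M"
    and extend: "\<And>\<sigma>. Re \<sigma> \<le> c \<Longrightarrow>
      \<exists>\<epsilon>>0. \<forall>t. 0 \<le> t \<and> t \<le> \<epsilon> \<longrightarrow> (\<exists>\<sigma>'. Re \<sigma>' \<le> c \<and> K \<sigma>' = K \<sigma> - of_real t)"
    and s1: "Re s1 \<le> c" and x: "0 \<le> x"
  shows "\<exists>\<sigma>. Re \<sigma> \<le> c \<and> K \<sigma> = K s1 - of_real x"
proof (rule ccontr)
  assume nR: "\<not> ?thesis"
  define T where "T = {\<sigma>. Re \<sigma> \<le> c} \<inter>
    K -` ({p. Im p = Im (K s1)} \<inter> {p. Re (K s1) - x \<le> Re p} \<inter> {p. Re p \<le> Re (K s1)})"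
  have clT: "closed T" unfolding T_def
    by (rule continuous_closed_preimage[OF contK closed_halfspace_Re_le])
       (intro closed_Int closed_halfspace_Re_le closed_halfspace_Re_ge closed_Collect_eq continuous_intros)
  have bT: "bounded T"
  proof -
    have "norm \<sigma> \<le> \<bar>c\<bar> + \<bar>Re (K s1)\<bar> + x + \<bar>Im (K s1)\<bar> + 2 * M" if "\<sigma> \<in> T" for \<sigma>
    proof -
      have a: "Re \<sigma> \<le> c" "Im (K \<sigma>) = Im (K s1)" "Re (K s1) - x \<le> Re (K \<sigma>)"
        using that by (auto simp: T_def)
      have "\<bar>Re (K \<sigma>) - Re \<sigma>\<bar> \<le> M" "\<bar>Im (K \<sigma>) - Im \<sigma>\<bar> \<le> M"
        using abs_Re_le_cmod[of "K \<sigma> - \<sigma>"] abs_Im_le_cmod[of "K \<sigma> - \<sigma>"] bnd[OF a(1)] by auto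
      then show ?thesis using a x cmod_le[of \<sigma>] by linarith
    qed
    then show ?thesis unfolding bounded_iff by blast
  qed
  define X where "X = (\<lambda>\<sigma>. Re (K s1) - Re (K \<sigma>)) ` T"
  have cX: "compact X" unfolding X_def
    by (intro compact_continuous_image continuous_intros continuous_on_subset[OF contK])
       (use clT bT in \<open>auto simp: compact_eq_bounded_closed T_def\<close>)
  have "s1 \<in> T" using s1 x by (simp add: T_def)
  then have "X \<noteq> {}" by (auto simp: X_def)
  then obtain xs where "xs \<in> X" and max: "\<And>y. y \<in> X \<Longrightarrow> y \<le> xs"
    using compact_attains_sup[OF cX] by blast
  then obtain \<sigma>s where \<sigma>s: "\<sigma>s \<in> T" and xs_def: "xs = Re (K s1) - Re (K \<sigma>s)"
    unfolding X_def by blast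
  have Ks: "K \<sigma>s = K s1 - of_real xs" using \<sigma>s by (simp add: T_def xs_def complex_eq_iff)
  have \<sigma>sc: "Re \<sigma>s \<le> c" and "0 \<le> xs" "xs \<le> x" using \<sigma>s by (auto simp: T_def xs_def)
  moreover have "xs \<noteq> x" using nR \<sigma>sc Ks by blast
  ultimately have xs: "0 \<le> xs" "xs < x" by auto
  obtain \<epsilon> where \<epsilon>: "0 < \<epsilon>" and ext: "\<And>t. 0 \<le> t \<Longrightarrow> t \<le> \<epsilon> \<Longrightarrow> \<exists>\<sigma>'. Re \<sigma>' \<le> c \<and> K \<sigma>' = K \<sigma>s - of_real t"
    using extend[OF \<sigma>sc] by blast
  define t where "t = min \<epsilon> (x - xs)"
  have "0 \<le> t" "t \<le> \<epsilon>" using \<epsilon> xs by (auto simp: t_def)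
  then obtain \<sigma>' where \<sigma>': "Re \<sigma>' \<le> c" "K \<sigma>' = K \<sigma>s - of_real t" using ext by blast
  then have "K \<sigma>' = K s1 - of_real (xs + t)" using Ks by simp
  then have "\<sigma>' \<in> T" using \<sigma>'(1) xs \<epsilon> by (auto simp: T_def t_def)
  then have "xs + t \<in> X" using \<open>K \<sigma>' = K s1 - of_real (xs + t)\<close> unfolding X_def by force
  then have "xs + t \<le> xs" by (rule max)
  then show False using \<epsilon> xs by (simp add: t_def)
qed

lemma continuous_on_01_if_norm_le_linear:
  fixes \<zeta> :: "real \<Rightarrow> 'a::real_normed_vector"
  assumes \<zeta>0: "\<zeta> 0 = 0" and le: "\<And>t. 0 < t \<Longrightarrow> t \<le> 1 \<Longrightarrow> norm (\<zeta> t) \<le> C * t"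
    and cont: "\<And>t. 0 < t \<Longrightarrow> t \<le> 1 \<Longrightarrow> isCont \<zeta> t"
  shows "continuous_on {0..1} \<zeta>"
proof -
  have "(\<zeta> \<longlongrightarrow> 0) (at 0 within {0..1})"
  proof (rule tendsto_sandwich[of "\<lambda>_. 0" "\<lambda>t. norm (\<zeta> t)" _ "\<lambda>t. C * t",
        THEN tendsto_norm_zero_cancel])
    show "\<forall>\<^sub>F t in at 0 within {0..1}. 0 \<le> norm (\<zeta> t)" by simp
    show "\<forall>\<^sub>F t in at 0 within {0..1}. norm (\<zeta> t) \<le> C * t"
      using le by (auto simp: eventually_at_filter)
    have "((\<lambda>t. C * t) \<longlongrightarrow> C * 0) (at 0 within {0..1})" by (intro tendsto_intros)
    then show "((\<lambda>t. C * t) \<longlongrightarrow> 0) (at 0 within {0..1})" by simp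
  qed simp
  then have "continuous (at 0 within {0..1}) \<zeta>" using \<zeta>0 by (simp add: continuous_within)
  moreover have "continuous (at t within {0..1}) \<zeta>" if "0 < t" "t \<le> 1" for t
    using cont[OF that] by (rule continuous_at_imp_continuous_at_within)
  ultimately show ?thesis
    by (auto simp: continuous_on_eq_continuous_within order_le_less)
qed

lemma log_coordinate_inverse:
  fixes K :: "complex \<Rightarrow> complex"
  assumes holK: "K holomorphic_on {s. Re s < 0}"
    and ReK: "\<And>s. Re s < 0 \<Longrightarrow> 0 < Re (deriv K s)"
    and bnd: "\<And>c. c < 0 \<Longrightarrow> \<exists>M. \<forall>s. Re s \<le> c \<longrightarrow> norm (K s - s) \<le> M"
  obtains g where "open (K ` {s. Re s < 0})" "g holomorphic_on K ` {s. Re s < 0}"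
    "\<And>s. Re s < 0 \<Longrightarrow> g (K s) = s"
    "\<And>c s x. c < 0 \<Longrightarrow> Re s \<le> c \<Longrightarrow> 0 \<le> x \<Longrightarrow>
      K s - of_real x \<in> K ` {s. Re s < 0} \<and> Re (g (K s - of_real x)) \<le> c"
proof -
  define H where "H = {s::complex. Re s < 0}"
  have oH: "open H" and cvxH: "convex H"
    unfolding H_def by (simp_all add: open_halfspace_Re_lt convex_halfspace_Re_lt)
  have "\<And>s. s \<in> H \<Longrightarrow> 0 < Re (deriv K s)" using ReK by (simp add: H_def)
  then obtain g where oKH: "open (K ` H)" and holg: "g holomorphic_on K ` H"
    and gK: "\<And>s. s \<in> H \<Longrightarrow> g (K s) = s" and Reg: "\<And>p. p \<in> K ` H \<Longrightarrow> 0 < Re (deriv g p)"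
    using holomorphic_inverse_if_Re_deriv_pos[OF holK[folded H_def] oH cvxH] by auto
  have gKH: "g p \<in> H \<and> K (g p) = p" if "p \<in> K ` H" for p
    using that gK by auto
  have ray: "K s - of_real x \<in> K ` H \<and> Re (g (K s - of_real x)) \<le> c"
    if c: "c < 0" and s: "Re s \<le> c" and x: "0 \<le> x" for c s x
  proof -
    obtain M where M: "\<And>s. Re s \<le> c \<Longrightarrow> norm (K s - s) \<le> M" using bnd[OF c] by blast
    have cH: "{s. Re s \<le> c} \<subseteq> H" using c by (auto simp: H_def)
    have extend: "\<exists>\<epsilon>>0. \<forall>t. 0 \<le> t \<and> t \<le> \<epsilon> \<longrightarrow> (\<exists>\<sigma>'. Re \<sigma>' \<le> c \<and> K \<sigma>' = K \<sigma> - of_real t)"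
      if "Re \<sigma> \<le> c" for \<sigma>
    proof -
      have \<sigma>: "\<sigma> \<in> H" using that cH by auto
      obtain \<epsilon> where "0 < \<epsilon>" and \<epsilon>: "\<And>t. 0 \<le> t \<Longrightarrow> t \<le> \<epsilon> \<Longrightarrow>
          K \<sigma> - of_real t \<in> K ` H \<and> Re (g (K \<sigma> - of_real t)) \<le> Re \<sigma>"
        using inverse_leftward_Re_le[OF oKH holg gK Reg \<sigma>] by auto
      have "Re (g (K \<sigma> - of_real t)) \<le> c \<and> K (g (K \<sigma> - of_real t)) = K \<sigma> - of_real t"
        if "0 \<le> t" "t \<le> \<epsilon>" for t
        using \<epsilon>[OF that] gKH \<open>Re \<sigma> \<le> c\<close> by fastforce
      with \<open>0 < \<epsilon>\<close> show ?thesis by blast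
    qed
    have contK: "continuous_on {s. Re s \<le> c} K"
      using holomorphic_on_imp_continuous_on[OF holK[folded H_def]] cH by (rule continuous_on_subset)
    obtain \<sigma> where \<sigma>: "Re \<sigma> \<le> c" "K \<sigma> = K s - of_real x"
      using leftward_ray_in_image[OF contK M extend s x] by blast
    then have "\<sigma> \<in> H" using cH by auto
    then show ?thesis using gK[of \<sigma>] \<sigma> by (metis imageI)
  qed
  show ?thesis using that[of g] oKH holg gK ray unfolding H_def by blast
qed

lemma log_coordinate_lift_of_ray:
  fixes K :: "complex \<Rightarrow> complex"
  assumes holK: "K holomorphic_on {s. Re s < 0}"
    and ReK: "\<And>s. Re s < 0 \<Longrightarrow> 0 < Re (deriv K s)"
    and bnd: "\<And>c. c < 0 \<Longrightarrow> \<exists>M. \<forall>s. Re s \<le> c \<longrightarrow> norm (K s - s) \<le> M"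
    and s1: "Re s1 < 0"
  obtains \<Gamma> \<Gamma>' where "\<Gamma> 1 = s1"
    "\<And>t. 0 < t \<Longrightarrow> t \<le> 1 \<Longrightarrow> Re (\<Gamma> t) \<le> Re s1 \<and> K (\<Gamma> t) = K s1 + of_real (ln t)"
    "\<And>t. 0 < t \<Longrightarrow> t \<le> 1 \<Longrightarrow> (\<Gamma> has_vector_derivative \<Gamma>' t) (at t)"
proof -
  define H where "H = {s::complex. Re s < 0}"
  obtain g where oKH: "open (K ` H)" and holg: "g holomorphic_on K ` H"
    and gK: "\<And>s. s \<in> H \<Longrightarrow> g (K s) = s"
    and ray: "\<And>c s x. c < 0 \<Longrightarrow> Re s \<le> c \<Longrightarrow> 0 \<le> x \<Longrightarrow>
      K s - of_real x \<in> K ` H \<and> Re (g (K s - of_real x)) \<le> c"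
    using log_coordinate_inverse[OF holK ReK bnd] unfolding H_def by auto
  \<comment> \<open>in log coordinates the segment \<open>(0, h (exp s1)]\<close> is the leftward ray from \<open>K s1\<close>\<close>
  define P where "P = (\<lambda>t::real. K s1 + of_real (ln t))"
  have P: "P t \<in> K ` H \<and> Re (g (P t)) \<le> Re s1 \<and> K (g (P t)) = P t" if t: "0 < t" "t \<le> 1" for t
  proof -
    have "0 \<le> - ln t" using t by simp
    from ray[OF s1 order_refl this] have "P t \<in> K ` H \<and> Re (g (P t)) \<le> Re s1" by (simp add: P_def)
    then show ?thesis using gK by auto
  qed
  have dgP: "(g \<circ> P has_vector_derivative of_real (1 / t) * deriv g (P t)) (at t)"
    if "0 < t" "t \<le> 1" for t
  proof (rule field_vector_diff_chain_at)
    show "(P has_vector_derivative of_real (1 / t)) (at t)"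
      unfolding P_def using that by (auto intro!: derivative_eq_intros)
    show "(g has_field_derivative deriv g (P t)) (at (P t))"
      using holomorphic_derivI[OF holg oKH] P[OF that] by blast
  qed
  show ?thesis
  proof (rule that[of "g \<circ> P" "\<lambda>t. of_real (1 / t) * deriv g (P t)", OF _ _ dgP])
    show "(g \<circ> P) 1 = s1" using gK s1 by (simp add: P_def H_def)
    show "Re ((g \<circ> P) t) \<le> Re s1 \<and> K ((g \<circ> P) t) = K s1 + of_real (ln t)"
      if "0 < t" "t \<le> 1" for t
      using P[OF that] by (simp add: P_def)
  qed
qed

lemma log_coordinate_preimage_path:
  fixes h K :: "complex \<Rightarrow> complex"
  assumes holK: "K holomorphic_on {s. Re s < 0}"
    and expK: "\<And>s. Re s < 0 \<Longrightarrow> exp (K s) = h (exp s)"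
    and ReK: "\<And>s. Re s < 0 \<Longrightarrow> 0 < Re (deriv K s)"
    and bnd: "\<And>c. c < 0 \<Longrightarrow> \<exists>M. \<forall>s. Re s \<le> c \<longrightarrow> norm (K s - s) \<le> M"
    and h0: "h 0 = 0" and z: "z \<in> ball 0 1" "z \<noteq> 0"
  obtains \<zeta> \<zeta>' where "\<zeta> 0 = 0" "\<zeta> 1 = z" "continuous_on {0..1} \<zeta>"
    "\<And>t. t \<in> {0<..<1} \<Longrightarrow> (\<zeta> has_vector_derivative \<zeta>' t) (at t)"
    "\<And>t. t \<in> {0..1} \<Longrightarrow> norm (\<zeta> t) \<le> norm z"
    "\<And>t. t \<in> {0..1} \<Longrightarrow> h (\<zeta> t) = of_real t * h z"
proof -
  define s1 where "s1 = Ln z"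
  have s1: "Re s1 = ln (norm z)" "Re s1 < 0" "exp s1 = z" using z by (simp_all add: s1_def)
  obtain \<Gamma> \<Gamma>' where \<Gamma>1: "\<Gamma> 1 = s1"
    and \<Gamma>: "\<And>t. 0 < t \<Longrightarrow> t \<le> 1 \<Longrightarrow> Re (\<Gamma> t) \<le> Re s1 \<and> K (\<Gamma> t) = K s1 + of_real (ln t)"
    and d\<Gamma>: "\<And>t. 0 < t \<Longrightarrow> t \<le> 1 \<Longrightarrow> (\<Gamma> has_vector_derivative \<Gamma>' t) (at t)"
    using log_coordinate_lift_of_ray[OF holK ReK bnd s1(2)] by blast
  obtain M where M: "\<And>s. Re s \<le> Re s1 \<Longrightarrow> norm (K s - s) \<le> M" using bnd[OF s1(2)] by blast
  define \<zeta> where "\<zeta> = (\<lambda>t::real. if t = 0 then 0 else exp (\<Gamma> t))"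
  have d\<zeta>: "(\<zeta> has_vector_derivative \<Gamma>' t * exp (\<Gamma> t)) (at t)" if "0 < t" "t \<le> 1" for t
  proof -
    have "((\<lambda>t. exp (\<Gamma> t)) has_vector_derivative \<Gamma>' t * exp (\<Gamma> t)) (at t)"
      using field_vector_diff_chain_at[OF d\<Gamma>[OF that] DERIV_exp] by (simp add: o_def)
    then show ?thesis
      by (rule has_vector_derivative_transform_within_open[OF _ open_greaterThan])
         (use that in \<open>auto simp: \<zeta>_def\<close>)
  qed
  have lin: "norm (\<zeta> t) \<le> exp (Re (K s1) + M) * t" if "0 < t" "t \<le> 1" for t
  proof -
    have "\<bar>Re (K (\<Gamma> t)) - Re (\<Gamma> t)\<bar> \<le> M"
      using abs_Re_le_cmod[of "K (\<Gamma> t) - \<Gamma> t"] M \<Gamma>[OF that] by force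
    then have "Re (\<Gamma> t) \<le> Re (K s1) + M + ln t" using \<Gamma>[OF that] by simp
    then have "exp (Re (\<Gamma> t)) \<le> exp (Re (K s1) + M + ln t)" by simp
    also have "\<dots> = exp (Re (K s1) + M) * t" using that by (simp add: exp_add)
    finally show ?thesis using that by (simp add: \<zeta>_def norm_exp_eq_Re)
  qed
  have "isCont \<zeta> t" if "0 < t" "t \<le> 1" for t
    using d\<zeta>[OF that] by (rule has_vector_derivative_continuous)
  then have cont: "continuous_on {0..1} \<zeta>"
    by (intro continuous_on_01_if_norm_le_linear[OF _ lin]) (simp_all add: \<zeta>_def)
  have norm_le: "norm (\<zeta> t) \<le> norm z" if "t \<in> {0..1}" for t
  proof (cases "t = 0")
    case False
    then have "exp (Re (\<Gamma> t)) \<le> exp (Re s1)" using \<Gamma>[of t] that by auto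
    then show ?thesis using False s1 z by (simp add: \<zeta>_def norm_exp_eq_Re)
  qed (simp add: \<zeta>_def)
  have h\<zeta>: "h (\<zeta> t) = of_real t * h z" if "t \<in> {0..1}" for t
  proof (cases "t = 0")
    case False
    then have t: "0 < t" "t \<le> 1" using that by auto
    then have "h (\<zeta> t) = exp (K (\<Gamma> t))" using expK[of "\<Gamma> t"] \<Gamma>[OF t] s1(2) False
      by (simp add: \<zeta>_def)
    also have "\<dots> = of_real t * exp (K s1)" using t \<Gamma>[OF t] by (simp add: exp_add exp_of_real)
    finally show ?thesis using expK[of s1] s1 by simp
  qed (simp add: \<zeta>_def h0)
  show ?thesis
  proof (rule that[of \<zeta> "\<lambda>t. \<Gamma>' t * exp (\<Gamma> t)", OF _ _ cont _ norm_le h\<zeta>])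
    show "\<zeta> 0 = 0" "\<zeta> 1 = z" using \<Gamma>1 s1 by (simp_all add: \<zeta>_def)
    show "(\<zeta> has_vector_derivative \<Gamma>' t * exp (\<Gamma> t)) (at t)" if "t \<in> {0<..<1}" for t
      using d\<zeta> that by simp
  qed
qed

lemma class_F_deriv_h_plus_mult_g:
  assumes F: "class_F \<alpha> h g" and \<theta>: "\<And>z. z \<in> ball 0 1 \<Longrightarrow> deriv g z = cis \<theta> * z * deriv h z"
    and z: "z \<in> ball 0 1"
  shows "((\<lambda>z. h z + lam * g z) has_field_derivative deriv h z * (1 + lam * cis \<theta> * z)) (at z)"
proof -
  have "((\<lambda>z. h z + lam * g z) has_field_derivative deriv h z + lam * deriv g z) (at z)"
    using holomorphic_derivI[OF class_F_D(1)[OF F] open_ball z]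
      holomorphic_derivI[OF class_F_D(2)[OF F] open_ball z]
    by (intro DERIV_add DERIV_cmult)
  then show ?thesis using \<theta>[OF z] by (simp add: algebra_simps)
qed

lemma Re_weighted_deriv_ge:
  fixes W Z Z' H' \<mu> :: complex and k :: real
  assumes key: "Z' * H' = W" and W: "W \<noteq> 0" and Z: "Z \<noteq> 0" and \<mu>: "norm \<mu> = 1"
    and k: "0 \<le> k" "k \<le> (1 - norm Z) * norm H'"
  shows "k * (Re (cnj Z * Z') / norm Z) \<le> Re (cnj W * (Z' * (H' * (1 + \<mu> * Z)))) / norm W"
proof -
  have "k * (Re (cnj Z * Z') / norm Z) \<le> k * norm Z'"
    using complex_Re_le_cmod[of "cnj Z * Z'"] Z k(1)
    by (intro mult_left_mono) (simp_all add: norm_mult divide_le_eq mult.commute)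
  also have "\<dots> \<le> ((1 - norm Z) * norm H') * norm Z'" using k(2) by (rule mult_right_mono) simp
  also have "\<dots> = (1 - norm Z) * (norm Z' * norm H')" by simp
  also have "\<dots> \<le> norm W * Re (1 + \<mu> * Z)"
  proof -
    have "1 - norm Z \<le> Re (1 + \<mu> * Z)" using abs_Re_le_cmod[of "\<mu> * Z"] \<mu> by (simp add: norm_mult)
    then have "(1 - norm Z) * norm W \<le> Re (1 + \<mu> * Z) * norm W" by (rule mult_right_mono) simp
    moreover have "norm Z' * norm H' = norm W" using key by (metis norm_mult)
    ultimately show ?thesis by (simp add: mult.commute)
  qed
  also have "\<dots> = Re (cnj W * (Z' * (H' * (1 + \<mu> * Z)))) / norm W"
  proof -
    have X: "cnj W * (Z' * (H' * (1 + \<mu> * Z))) = of_real ((norm W)^2) * (1 + \<mu> * Z)"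
      using key complex_norm_square[of W] by (simp add: algebra_simps)
    have R: "Re (of_real a * Y) = a * Re Y" for a Y by simp
    show ?thesis unfolding X R using W by (simp add: power2_eq_square)
  qed
  finally show ?thesis .
qed

lemma integral_has_real_derivative_interior:
  assumes k: "continuous_on {a..b} k" and x: "x \<in> {a<..<b}"
  shows "((\<lambda>r. integral {a..r} k) has_real_derivative k x) (at x)"
proof -
  have "((\<lambda>r. integral {a..r} k) has_real_derivative k x) (at x within {a..b})"
    by (rule integral_has_real_derivative[OF k]) (use x in auto)
  moreover have "at x within {a..b} = at x" by (rule at_within_interior) (use x in auto)
  ultimately show ?thesis by simp
qed

lemma derivative_eq_if_comp_linear:
  fixes \<zeta> :: "real \<Rightarrow> complex"
  assumes d\<zeta>: "(\<zeta> has_vector_derivative Z') (at t)" and dh: "(h has_field_derivative H') (at (\<zeta> t))"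
    and lin: "\<And>s. s \<in> S \<Longrightarrow> h (\<zeta> s) = of_real s * W" and S: "open S" "t \<in> S"
  shows "Z' * H' = W"
proof -
  have "((\<lambda>t. h (\<zeta> t)) has_vector_derivative Z' * H') (at t)"
    using field_vector_diff_chain_at[OF d\<zeta> dh] by (simp add: o_def)
  moreover have "((\<lambda>t. h (\<zeta> t)) has_vector_derivative W) (at t)"
  proof (rule has_vector_derivative_transform_within_open[OF _ S])
    show "((\<lambda>t. of_real t * W) has_vector_derivative W) (at t)"
      by (auto intro!: derivative_eq_intros simp flip: has_real_derivative_iff_has_vector_derivative)
  qed (use lin in auto)
  ultimately show ?thesis by (rule vector_derivative_unique_at)
qed

lemma class_F_Re_deriv_component_ge:
  assumes F: "class_F \<alpha> h g" and a1: "\<alpha> < 1" and \<mu>: "norm \<mu> = 1"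
    and Z: "Z \<in> ball 0 1" "Z \<noteq> 0" and key: "Z' * deriv h Z = W" and W: "W \<noteq> 0"
  shows "(1 - norm Z) / (1 + norm Z) powr (2 * (1 - \<alpha>)) * (Re (cnj Z * Z') / norm Z)
    \<le> Re (cnj W * (Z' * (deriv h Z * (1 + \<mu> * Z)))) / norm W"
proof (rule Re_weighted_deriv_ge[OF key W Z(2) \<mu>])
  have "(1 - norm Z) / (1 + norm Z) powr (2 * (1 - \<alpha>))
      = (1 - norm Z) * (1 + norm Z) powr (- (2 * (1 - \<alpha>)))"
    unfolding powr_minus by (simp only: divide_inverse)
  also have "\<dots> \<le> (1 - norm Z) * norm (deriv h Z)"
    using Z(1) class_F_norm_deriv_ge[OF F a1 Z(1)] by (intro mult_left_mono) auto
  finally show "(1 - norm Z) / (1 + norm Z) powr (2 * (1 - \<alpha>)) \<le> (1 - norm Z) * norm (deriv h Z)" .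
  show "0 \<le> (1 - norm Z) / (1 + norm Z) powr (2 * (1 - \<alpha>))" using Z(1) by simp
qed

lemma class_F_integral_le_norm_along_path:
  fixes \<zeta> \<zeta>' :: "real \<Rightarrow> complex"
  assumes F: "class_F \<alpha> h g" and a1: "\<alpha> < 1" and lam: "norm lam = 1"
    and z: "z \<in> ball 0 1" and hz: "h z \<noteq> 0"
    and \<zeta>0: "\<zeta> 0 = 0" and \<zeta>1: "\<zeta> 1 = z" and cont: "continuous_on {0..1} \<zeta>"
    and d\<zeta>: "\<And>t. t \<in> {0<..<1} \<Longrightarrow> (\<zeta> has_vector_derivative \<zeta>' t) (at t)"
    and norm_\<zeta>: "\<And>t. t \<in> {0..1} \<Longrightarrow> norm (\<zeta> t) \<le> norm z"
    and h\<zeta>: "\<And>t. t \<in> {0..1} \<Longrightarrow> h (\<zeta> t) = of_real t * h z"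
  shows "integral {0..norm z} (\<lambda>\<rho>. (1 - \<rho>) / (1 + \<rho>) powr (2 * (1 - \<alpha>))) \<le> norm (h z + lam * g z)"
proof -
  note cF = class_F_D[OF F]
  obtain \<theta> where \<theta>: "\<And>z. z \<in> ball 0 1 \<Longrightarrow> deriv g z = cis \<theta> * z * deriv h z"
    using cF(8) by blast
  define k where "k = (\<lambda>\<rho>::real. (1 - \<rho>) / (1 + \<rho>) powr (2 * (1 - \<alpha>)))"
  define \<Phi> where "\<Phi> = (\<lambda>r. integral {0..r} k)"
  define W where "W = h z"
  define F_lam where "F_lam = (\<lambda>z. h z + lam * g z)"
  have \<zeta>D: "\<zeta> t \<in> ball 0 1" if "t \<in> {0..1}" for t using norm_\<zeta>[OF that] z by simp
  have contk: "continuous_on {0..1} k" unfolding k_def by (intro continuous_intros) auto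
  \<comment> \<open>compare the component of \<open>F_lam \<circ> \<zeta>\<close> in the direction of \<open>h z\<close> with \<open>\<Phi> (|\<zeta>|)\<close>\<close>
  define \<psi> where "\<psi> = (\<lambda>t. Re (cnj W * F_lam (\<zeta> t)) / norm W - \<Phi> (norm (\<zeta> t)))"
  have "\<psi> 0 \<le> \<psi> 1"
  proof (rule DERIV_nonneg_imp_increasing_open[of 0 1])
    have "continuous_on (ball 0 1) F_lam" unfolding F_lam_def
      by (intro continuous_intros holomorphic_on_imp_continuous_on cF(1,2))
    then have "continuous_on {0..1} (\<lambda>t. F_lam (\<zeta> t))"
      by (rule continuous_on_compose2[OF _ cont]) (use \<zeta>D in auto)
    moreover have "continuous_on {0..1} (\<lambda>t. \<Phi> (norm (\<zeta> t)))"
    proof (rule continuous_on_compose2[of "{0..1}" \<Phi>])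
      show "continuous_on {0..1} \<Phi>" unfolding \<Phi>_def
        by (rule indefinite_integral_continuous_1) (rule integrable_continuous_real[OF contk])
      show "continuous_on {0..1} (\<lambda>t. norm (\<zeta> t))" by (intro continuous_intros cont)
      show "(\<lambda>t. norm (\<zeta> t)) ` {0..1} \<subseteq> {0..1}"
        using norm_\<zeta> z by (force simp: image_subset_iff intro: order_trans[OF _ less_imp_le])
    qed
    ultimately show "continuous_on {0..1} \<psi>" unfolding \<psi>_def using hz
      by (intro continuous_intros) (auto simp: W_def)
  next
    fix t :: real assume t: "0 < t" "t < 1"
    define Z Z' where "Z = \<zeta> t" and "Z' = \<zeta>' t"
    have dZ: "(\<zeta> has_vector_derivative Z') (at t)" using d\<zeta>[of t] t by (simp add: Z'_def)
    have Z: "Z \<in> ball 0 1" "Z \<noteq> 0" using \<zeta>D[of t] h\<zeta>[of t] t cF(3) hz by (auto simp: Z_def)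
    have dh: "(h has_field_derivative deriv h Z) (at (\<zeta> t))"
      using holomorphic_derivI[OF cF(1) open_ball Z(1)] by (simp add: Z_def)
    have dF: "(F_lam has_field_derivative deriv h Z * (1 + lam * cis \<theta> * Z)) (at (\<zeta> t))"
      using class_F_deriv_h_plus_mult_g[OF F \<theta> Z(1)] by (simp add: Z_def F_lam_def)
    have key: "Z' * deriv h Z = W"
      by (rule derivative_eq_if_comp_linear[OF dZ dh _ open_greaterThanLessThan, of 0 1])
         (use t h\<zeta> in \<open>auto simp: W_def\<close>)
    have "((\<lambda>t. Re (cnj W * F_lam (\<zeta> t)) / norm W) has_real_derivative
        Re (cnj W * (Z' * (deriv h Z * (1 + lam * cis \<theta> * Z)))) / norm W) (at t)"
      using field_vector_diff_chain_at[OF dZ dF]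
      by (intro DERIV_cdivide has_field_derivative_Re has_vector_derivative_mult_right)
         (simp add: o_def)
    moreover have "((\<lambda>t. \<Phi> (norm (\<zeta> t))) has_real_derivative k (norm Z) * (Re (cnj Z * Z') / norm Z)) (at t)"
      using DERIV_chain2[OF integral_has_real_derivative_interior[OF contk] norm_has_real_derivative[OF dZ]] Z
      by (simp add: Z_def \<Phi>_def)
    ultimately have "(\<psi> has_real_derivative Re (cnj W * (Z' * (deriv h Z * (1 + lam * cis \<theta> * Z)))) / norm W
        - k (norm Z) * (Re (cnj Z * Z') / norm Z)) (at t)"
      unfolding \<psi>_def by (rule DERIV_diff)
    moreover have "k (norm Z) * (Re (cnj Z * Z') / norm Z)
        \<le> Re (cnj W * (Z' * (deriv h Z * (1 + lam * cis \<theta> * Z)))) / norm W"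
      unfolding k_def
      by (rule class_F_Re_deriv_component_ge[OF F a1 _ Z key])
         (use lam hz in \<open>simp_all add: W_def norm_mult\<close>)
    ultimately show "\<exists>y. (\<psi> has_real_derivative y) (at t) \<and> 0 \<le> y"
      by (metis diff_ge_0_iff_ge)
  qed simp
  moreover have "\<psi> 0 = 0" using \<zeta>0 cF(3,4) by (simp add: \<psi>_def \<Phi>_def F_lam_def)
  moreover have "Re (cnj W * F_lam z) / norm W \<le> norm (F_lam z)"
    using complex_Re_le_cmod[of "cnj W * F_lam z"] hz by (simp add: W_def norm_mult divide_le_eq mult.commute)
  ultimately show ?thesis by (simp add: \<psi>_def \<Phi>_def k_def F_lam_def \<zeta>1)
qed

theorem mainTheorem2:
  fixes \<alpha> :: real and h g :: "complex \<Rightarrow> complex" and lam z :: complex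
  assumes "0 \<le> \<alpha>" and "\<alpha> < 1"
    and "class_F \<alpha> h g"
    and "norm lam = 1"
    and "z \<in> ball 0 1"
  shows "integral {0..norm z} (\<lambda>\<rho>. (1 - \<rho>) / (1 + \<rho>) powr (2 * (1 - \<alpha>))) = L_bound (norm z) \<alpha>
         \<and> norm (h z + lam * g z) \<ge> integral {0..norm z} (\<lambda>\<rho>. (1 - \<rho>) / (1 + \<rho>) powr (2 * (1 - \<alpha>)))"
proof
  note a0 = assms(1) and a1 = assms(2) and F = assms(3) and lam = assms(4) and z = assms(5)
  show "integral {0..norm z} (\<lambda>\<rho>. (1 - \<rho>) / (1 + \<rho>) powr (2 * (1 - \<alpha>))) = L_bound (norm z) \<alpha>"
    by (rule integral_eq_L_bound) simp
  show "integral {0..norm z} (\<lambda>\<rho>. (1 - \<rho>) / (1 + \<rho>) powr (2 * (1 - \<alpha>))) \<le> norm (h z + lam * g z)"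
  proof (cases "z = 0")
    case True
    then show ?thesis using class_F_D(3,4)[OF F] by simp
  next
    case False
    obtain K where holK: "K holomorphic_on {s. Re s < 0}"
      and expK: "\<And>s. Re s < 0 \<Longrightarrow> exp (K s) = h (exp s)"
      and ReK: "\<And>s. Re s < 0 \<Longrightarrow> 0 < Re (deriv K s)"
      and bnd: "\<And>c. c < 0 \<Longrightarrow> \<exists>M. \<forall>s. Re s \<le> c \<longrightarrow> norm (K s - s) \<le> M"
      using class_F_log_coordinate[OF F a0] by blast
    have "h z \<noteq> 0" using expK[of "Ln z"] False z by (metis Re_Ln exp_Ln exp_not_eq_zero ln_less_zero_iff
        mem_ball_0 zero_less_norm_iff)
    moreover obtain \<zeta> \<zeta>' where "\<zeta> 0 = 0" "\<zeta> 1 = z" "continuous_on {0..1} \<zeta>"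
      "\<And>t. t \<in> {0<..<1} \<Longrightarrow> (\<zeta> has_vector_derivative \<zeta>' t) (at t)"
      "\<And>t. t \<in> {0..1} \<Longrightarrow> norm (\<zeta> t) \<le> norm z"
      "\<And>t. t \<in> {0..1} \<Longrightarrow> h (\<zeta> t) = of_real t * h z"
      using log_coordinate_preimage_path[OF holK expK ReK bnd class_F_D(3)[OF F] z False] by blast
    ultimately show ?thesis by (rule class_F_integral_le_norm_along_path[OF F a1 lam z])
  qed
qed

end
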